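(* Let $K$ be an algebraically closed field of characteristic zero, $\mathcal{K} = K(t)$, $f(z) = z^2+t$, $\alpha \in \mathcal{K}$, and $N \ge 1$. The following are equivalent: (A) $\alpha$ does not realize portrait $(1,N)$ for $f$; (B) for every place $\mathfrak{p}$ of $\mathcal{K}$ at which $\Phi_N(-\alpha,t)$ vanishes, either $\Phi_n(-\alpha,t)$ also vanishes at $\mathfrak{p}$ for some proper divisor $n$ of $N$, or $\alpha$ also vanishes at $\mathfrak{p}$.
   Context: Places of $\mathcal{K}$ are those trivial on $K$, corresponding to $c \in \mathbb{P}^1(K)$; an element vanishes at a place if its valuation there is positive. The $n$th dynatomic polynomial of $f$ is $\Phi_n(z,t) := \prod_{m\mid n}(f^m(z)-z)^{\mu(n/m)} \in \mathbb{Z}[z,t]$, $\mu$ the Möbius function. For $c\in K$, $f_c(z) = z^2+c$. A point $x$ has preperiodic portrait $(M,N)$ for $\phi$ if $M\ge0$ is minimal with $\phi^M(x)$ periodic and $\phi^M(x)$ has exact period $N$. We say $\alpha$ realizes portrait $(M,N)$ for $f$ if there exists $c \in K$ such that $\alpha(c)$ (reduction modulo the place $t=c$) has portrait $(M,N)$ for $f_c$. *)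

theory Defs
  imports "HOL-Computational_Algebra.Computational_Algebra"
begin

text \<open>The rational function field K(t) is rendered as 'a poly fract.\<close>

definition tvar :: "'a::field poly fract" where
  "tvar = Fract [:0, 1:] 1"

definition moebius :: "nat \<Rightarrow> int" where
  "moebius n = (if squarefree n then (-1) ^ card (prime_factors n) else 0)"

fun fiter :: "nat \<Rightarrow> 'a::field poly fract poly" where
  "fiter 0 = [:0, 1:]"
| "fiter (Suc m) = (fiter m)\<^sup>2 + [:tvar:]"

text \<open>Dynatomic polynomial Phi_n(z,t) = prod_{m | n} (f^m(z) - z)^(mu(n/m)), as a polynomial
  in z over K(t): the product of the factors with exponent +1 divided (exactly) by the
  product of the factors with exponent -1.\<close>
definition dynatomic :: "nat \<Rightarrow> 'a::field poly fract poly" where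
  "dynatomic n =
     (\<Prod>m\<in>{m. m dvd n \<and> moebius (n div m) = 1}. fiter m - [:0, 1:]) div
     (\<Prod>m\<in>{m. m dvd n \<and> moebius (n div m) = -1}. fiter m - [:0, 1:])"

text \<open>Places of K(t) trivial on K: t = c for c in K, or infinity.\<close>
datatype 'a place = Fin 'a | Inf

definition place_val :: "'a::field place \<Rightarrow> 'a poly fract \<Rightarrow> int" where
  "place_val P x = (THE v. \<exists>p q. p \<noteq> 0 \<and> q \<noteq> 0 \<and> x = Fract p q \<and>
      v = (case P of Fin c \<Rightarrow> int (order c p) - int (order c q)
                   | Inf \<Rightarrow> int (degree q) - int (degree p)))"

definition vanishes_at :: "'a::field place \<Rightarrow> 'a poly fract \<Rightarrow> bool" where
  "vanishes_at P x \<longleftrightarrow> x = 0 \<or> place_val P x > 0"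

definition is_periodic :: "('b \<Rightarrow> 'b) \<Rightarrow> 'b \<Rightarrow> bool" where
  "is_periodic \<phi> y \<longleftrightarrow> (\<exists>n>0. (\<phi> ^^ n) y = y)"

definition exact_period :: "('b \<Rightarrow> 'b) \<Rightarrow> 'b \<Rightarrow> nat \<Rightarrow> bool" where
  "exact_period \<phi> y N \<longleftrightarrow> N > 0 \<and> (\<phi> ^^ N) y = y \<and> (\<forall>n. 0 < n \<and> n < N \<longrightarrow> (\<phi> ^^ n) y \<noteq> y)"

definition has_portrait :: "('b \<Rightarrow> 'b) \<Rightarrow> 'b \<Rightarrow> nat \<Rightarrow> nat \<Rightarrow> bool" where
  "has_portrait \<phi> x M N \<longleftrightarrow>
     is_periodic \<phi> ((\<phi> ^^ M) x) \<and> (\<forall>k<M. \<not> is_periodic \<phi> ((\<phi> ^^ k) x)) \<and>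
     exact_period \<phi> ((\<phi> ^^ M) x) N"

definition realizes_portrait :: "'a::field poly fract \<Rightarrow> nat \<Rightarrow> nat \<Rightarrow> bool" where
  "realizes_portrait \<alpha> M N \<longleftrightarrow>
     (\<exists>c p q. q \<noteq> 0 \<and> poly q c \<noteq> 0 \<and> \<alpha> = Fract p q \<and>
        has_portrait (\<lambda>z. z\<^sup>2 + c) (poly p c / poly q c) M N)"

end

theory Submission
  imports Defs "HOL-Computational_Algebra.Field_as_Ring"
begin

text \<open>
  Write \<open>F\<^sub>m = f\<^sup>m(z) - z\<close>, so that \<open>\<Phi>\<^sub>n\<close> is the product of the \<open>F\<^sub>m\<close>, \<open>m | n\<close>, with
  exponents \<open>\<mu>(n/m)\<close>.  The division in the definition of \<open>\<Phi>\<^sub>n\<close> is exact: each \<open>F\<^sub>m\<close> is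
  squarefree over \<open>K(t)\<close> (by Gauss's lemma over the local ring at \<open>t = 0\<close>, a square factor would
  survive the reduction to \<open>z^(2^m) - z\<close>, which is separable in characteristic zero), and the
  \<open>m\<close> for which a given prime divides \<open>F\<^sub>m\<close> are the multiples of a fixed period, so Moebius
  inversion yields nonnegative multiplicities.

  At infinity and at the poles of \<open>\<alpha>\<close> the valuation of \<open>F\<^sub>m(-\<alpha>)\<close> is \<open>2\<^sup>m\<close> times a fixed
  negative number, and \<open>2\<^sup>N\<close> outweighs the sum of \<open>2\<^sup>m\<close> over the proper divisors \<open>m\<close> of \<open>N\<close>,
  so \<open>\<Phi>\<^sub>N(-\<alpha>)\<close> has a pole there.  At a place \<open>t = c\<close> where \<open>\<alpha>\<close> is regular, \<open>F\<^sub>m(-\<alpha>)\<close>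
  vanishes exactly when \<open>-\<alpha>(c)\<close> has a period dividing \<open>m\<close>; hence \<open>\<Phi>\<^sub>n(-\<alpha>)\<close> vanishes at \<open>c\<close>
  when \<open>-\<alpha>(c)\<close> has exact period \<open>n\<close>, and does not vanish when no divisor of \<open>n\<close> is a period
  of \<open>-\<alpha>(c)\<close>.  Finally \<open>\<alpha>(c)\<close> has portrait \<open>(1, N)\<close> under \<open>z\<^sup>2 + c\<close> iff \<open>\<alpha>(c) \<noteq> 0\<close> and
  \<open>-\<alpha>(c)\<close> has exact period \<open>N\<close>, since \<open>-\<alpha>(c)\<close> is the only other preimage of \<open>\<alpha>(c)\<^sup>2 + c\<close>.
\<close>

section \<open>Valuations at the places of \<open>K(t)\<close>\<close>

definition quotient_val :: "'a::field place \<Rightarrow> 'a poly \<Rightarrow> 'a poly \<Rightarrow> int" where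
  "quotient_val P p q = (case P of Fin c \<Rightarrow> int (order c p) - int (order c q)
                                | Inf \<Rightarrow> int (degree q) - int (degree p))"

lemma quotient_val_cong:
  assumes "p \<noteq> 0" "q \<noteq> 0" "p' \<noteq> 0" "q' \<noteq> 0" "p * q' = p' * q"
  shows "quotient_val P p q = quotient_val P p' q'"
proof (cases P)
  case (Fin c)
  have "order c (p * q') = order c (p' * q)" using assms by simp
  hence "order c p + order c q' = order c p' + order c q"
    using assms order_mult[of p q' c] order_mult[of p' q c] by simp
  thus ?thesis using Fin by (simp add: quotient_val_def)
next
  case Inf
  have "degree (p * q') = degree (p' * q)" using assms by simp
  hence "degree p + degree q' = degree p' + degree q"
    using assms by (metis degree_mult_eq)
  thus ?thesis using Inf by (simp add: quotient_val_def)
qed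

lemma place_val_Fract:
  assumes "p \<noteq> 0" "q \<noteq> 0"
  shows "place_val P (Fract p q) = quotient_val P p q"
  unfolding place_val_def quotient_val_def[symmetric]
proof (rule the_equality)
  fix v assume "\<exists>p' q'. p' \<noteq> 0 \<and> q' \<noteq> 0 \<and> Fract p q = Fract p' q' \<and> v = quotient_val P p' q'"
  then obtain p' q' where "p' \<noteq> 0" "q' \<noteq> 0" "Fract p q = Fract p' q'" "v = quotient_val P p' q'"
    by blast
  with assms show "v = quotient_val P p q"
    using quotient_val_cong[of p q p' q' P] by (simp add: eq_fract)
qed (use assms in blast)

lemma Fract_cases_nonzero:
  obtains p q where "x = Fract p q" "q \<noteq> 0" "x \<noteq> 0 \<Longrightarrow> p \<noteq> 0"
proof (cases x)
  case (Fract a b)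
  thus ?thesis using that[of a b] by (auto simp: Zero_fract_def eq_fract)
qed

lemma place_val_mult:
  fixes x y :: "'a::field poly fract"
  assumes "x \<noteq> 0" "y \<noteq> 0"
  shows "place_val P (x * y) = place_val P x + place_val P y"
proof -
  obtain p q where x: "x = Fract p q" "q \<noteq> 0" "p \<noteq> 0" using Fract_cases_nonzero[of x] assms by metis
  obtain r s where y: "y = Fract r s" "s \<noteq> 0" "r \<noteq> 0" using Fract_cases_nonzero[of y] assms by metis
  have "x * y = Fract (p * r) (q * s)" using x y by simp
  thus ?thesis using x y
    by (cases P) (simp_all add: place_val_Fract quotient_val_def order_mult degree_mult_eq)
qed

lemma place_val_1: "place_val P (1::'a::field poly fract) = 0"
  using place_val_Fract[of 1 1 P] by (simp add: quotient_val_def One_fract_def split: place.split)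

lemma place_val_uminus: "place_val P (- (x::'a::field poly fract)) = place_val P x"
proof (cases "x = 0")
  case False
  then obtain p q where "x = Fract p q" "q \<noteq> 0" "p \<noteq> 0" using Fract_cases_nonzero[of x] by metis
  thus ?thesis by (cases P) (simp_all add: place_val_Fract quotient_val_def)
qed simp

lemma place_val_power:
  fixes x :: "'a::field poly fract"
  assumes "x \<noteq> 0"
  shows "place_val P (x ^ n) = int n * place_val P x"
  using assms by (induction n) (simp_all add: place_val_1 place_val_mult algebra_simps)

lemma place_val_prod:
  fixes g :: "'b \<Rightarrow> 'a::field poly fract"
  assumes "finite A" "\<And>i. i \<in> A \<Longrightarrow> g i \<noteq> 0"
  shows "prod g A \<noteq> 0 \<and> place_val P (prod g A) = (\<Sum>i\<in>A. place_val P (g i))"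
  using assms by (induction A rule: finite_induct) (simp_all add: place_val_1 place_val_mult)

lemma order_add_eq_left:
  fixes p q :: "'a::field poly"
  assumes "p \<noteq> 0" "q \<noteq> 0" "order c p < order c q"
  shows "p + q \<noteq> 0 \<and> order c (p + q) = order c p"
proof -
  let ?X = "[:-c, 1:]"
  have "?X ^ Suc (order c p) dvd q" "\<not> ?X ^ Suc (order c p) dvd p"
    by (subst order_divides; use assms in auto)+
  hence not_dvd: "\<not> ?X ^ Suc (order c p) dvd p + q"
    by (metis add_diff_cancel_right' dvd_diff)
  hence nz: "p + q \<noteq> 0" by auto
  have "?X ^ order c p dvd q"
    by (subst order_divides) (use assms in auto)
  hence "?X ^ order c p dvd p + q" by (simp add: order_1)
  hence "order c p \<le> order c (p + q)" using nz by (simp add: order_divides)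
  moreover have "\<not> Suc (order c p) \<le> order c (p + q)"
    using not_dvd nz order_divides[of c "Suc (order c p)" "p + q"] by blast
  ultimately show ?thesis using nz by simp
qed

lemma place_val_add_eq_left:
  fixes x y :: "'a::field poly fract"
  assumes "x \<noteq> 0" "y \<noteq> 0" "place_val P x < place_val P y"
  shows "x + y \<noteq> 0 \<and> place_val P (x + y) = place_val P x"
proof -
  obtain p q where x: "x = Fract p q" "q \<noteq> 0" "p \<noteq> 0" using Fract_cases_nonzero[of x] assms by metis
  obtain r s where y: "y = Fract r s" "s \<noteq> 0" "r \<noteq> 0" using Fract_cases_nonzero[of y] assms by metis
  have sum: "x + y = Fract (p * s + r * q) (q * s)" using x y by simp
  have lt: "quotient_val P (p * s) (q * s) < quotient_val P (r * q) (q * s)"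
    using assms(3) x y by (cases P) (simp_all add: place_val_Fract quotient_val_def order_mult degree_mult_eq)
  have "p * s + r * q \<noteq> 0 \<and> quotient_val P (p * s + r * q) (q * s) = quotient_val P (p * s) (q * s)"
  proof (cases P)
    case (Fin c)
    thus ?thesis using lt order_add_eq_left[of "p * s" "r * q" c] x y by (simp add: quotient_val_def)
  next
    case Inf
    hence "degree (r * q) < degree (p * s)" using lt by (simp add: quotient_val_def)
    hence "degree (p * s + r * q) = degree (p * s)" by (rule degree_add_eq_left)
    thus ?thesis using Inf \<open>degree (r * q) < degree (p * s)\<close> by (auto simp: quotient_val_def)
  qed
  thus ?thesis using sum x y
    by (simp add: place_val_Fract quotient_val_def order_mult degree_mult_eq Zero_fract_def eq_fract
        split: place.split)
qed

lemma tvar_nonzero: "tvar \<noteq> (0::'a::field poly fract)"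
  by (simp add: tvar_def Zero_fract_def eq_fract)

lemma place_val_Inf_tvar: "place_val Inf (tvar::'a::field poly fract) = -1"
  by (simp add: tvar_def place_val_Fract quotient_val_def)

lemma place_val_Fin_tvar_nonneg: "place_val (Fin c) (tvar::'a::field poly fract) \<ge> 0"
  by (simp add: tvar_def place_val_Fract quotient_val_def)

section \<open>Reduction modulo a finite place\<close>

definition regular_at :: "'a::field \<Rightarrow> 'a poly fract \<Rightarrow> bool" where
  "regular_at c x \<longleftrightarrow> (\<exists>p q. poly q c \<noteq> 0 \<and> x = Fract p q)"

definition eval_at :: "'a::field \<Rightarrow> 'a poly fract \<Rightarrow> 'a" where
  "eval_at c x = (if regular_at c x
     then THE v. \<exists>p q. poly q c \<noteq> 0 \<and> x = Fract p q \<and> v = poly p c / poly q c else 0)"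

lemma eval_at_Fract:
  assumes "poly q c \<noteq> 0"
  shows "regular_at c (Fract p q) \<and> eval_at c (Fract p q) = poly p c / poly q c"
proof -
  have "(THE v. \<exists>p' q'. poly q' c \<noteq> 0 \<and> Fract p q = Fract p' q' \<and> v = poly p' c / poly q' c)
        = poly p c / poly q c"
  proof (rule the_equality)
    fix v assume "\<exists>p' q'. poly q' c \<noteq> 0 \<and> Fract p q = Fract p' q' \<and> v = poly p' c / poly q' c"
    then obtain p' q' where pq': "poly q' c \<noteq> 0" "Fract p q = Fract p' q'" "v = poly p' c / poly q' c"
      by blast
    moreover have "q \<noteq> 0" "q' \<noteq> 0" using assms pq' by auto
    ultimately have "p * q' = p' * q" by (simp add: eq_fract)
    hence "poly p c * poly q' c = poly p' c * poly q c" by (metis poly_mult)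
    thus "v = poly p c / poly q c" using pq' assms by (simp add: frac_eq_eq mult.commute)
  qed (use assms in blast)
  moreover have "regular_at c (Fract p q)" using assms unfolding regular_at_def by blast
  ultimately show ?thesis by (simp add: eval_at_def)
qed

lemma regular_atE:
  assumes "regular_at c x"
  obtains p q where "poly q c \<noteq> 0" "x = Fract p q" "eval_at c x = poly p c / poly q c"
  using assms eval_at_Fract unfolding regular_at_def by metis

lemma regular_at_add:
  assumes "regular_at c x" "regular_at c y"
  shows "regular_at c (x + y) \<and> eval_at c (x + y) = eval_at c x + eval_at c y"
proof -
  obtain p q r s where x: "poly q c \<noteq> 0" "x = Fract p q" "eval_at c x = poly p c / poly q c"
    and y: "poly s c \<noteq> 0" "y = Fract r s" "eval_at c y = poly r c / poly s c"
    using assms by (metis regular_atE)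
  have "q \<noteq> 0" "s \<noteq> 0" using x y by auto
  hence "x + y = Fract (p * s + r * q) (q * s)" using x y by simp
  moreover have "poly (p * s + r * q) c / poly (q * s) c = poly p c / poly q c + poly r c / poly s c"
    using x(1) y(1) by (simp add: field_simps)
  ultimately show ?thesis using x y eval_at_Fract[of "q * s" c "p * s + r * q"] by simp
qed

lemma regular_at_mult:
  assumes "regular_at c x" "regular_at c y"
  shows "regular_at c (x * y) \<and> eval_at c (x * y) = eval_at c x * eval_at c y"
proof -
  obtain p q r s where x: "poly q c \<noteq> 0" "x = Fract p q" "eval_at c x = poly p c / poly q c"
    and y: "poly s c \<noteq> 0" "y = Fract r s" "eval_at c y = poly r c / poly s c"
    using assms by (metis regular_atE)
  have "x * y = Fract (p * r) (q * s)" using x y by simp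
  thus ?thesis using x y eval_at_Fract[of "q * s" c "p * r"] by simp
qed

lemma regular_at_uminus: "regular_at c x \<Longrightarrow> regular_at c (- x) \<and> eval_at c (- x) = - eval_at c x"
proof -
  assume "regular_at c x"
  then obtain p q where "poly q c \<noteq> 0" "x = Fract p q" "eval_at c x = poly p c / poly q c"
    by (metis regular_atE)
  thus ?thesis using eval_at_Fract[of q c "- p"] by simp
qed

lemma regular_at_diff:
  "regular_at c x \<Longrightarrow> regular_at c y \<Longrightarrow> regular_at c (x - y) \<and> eval_at c (x - y) = eval_at c x - eval_at c y"
  using regular_at_add[of c x "- y"] regular_at_uminus[of c y] by simp

lemma regular_at_0: "regular_at c 0 \<and> eval_at c 0 = 0"
  using eval_at_Fract[of 1 c 0] by (simp add: Zero_fract_def)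

lemma regular_at_1: "regular_at c 1 \<and> eval_at c 1 = 1"
  using eval_at_Fract[of 1 c 1] by (simp add: One_fract_def)

lemma regular_at_tvar: "regular_at c tvar \<and> eval_at c tvar = c"
  using eval_at_Fract[of 1 c "[:0, 1:]"] by (simp add: tvar_def)

lemma regular_at_power: "regular_at c x \<Longrightarrow> regular_at c (x ^ n) \<and> eval_at c (x ^ n) = eval_at c x ^ n"
  by (induction n) (simp_all add: regular_at_1 regular_at_mult)

lemma regular_at_sum:
  "(\<And>i. i \<in> A \<Longrightarrow> regular_at c (g i)) \<Longrightarrow>
     regular_at c (sum g A) \<and> eval_at c (sum g A) = (\<Sum>i\<in>A. eval_at c (g i))"
  by (induction A rule: infinite_finite_induct) (simp_all add: regular_at_0 regular_at_add)

lemma regular_at_iff_place_val_nonneg: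
  assumes "x \<noteq> 0"
  shows "regular_at c x \<longleftrightarrow> place_val (Fin c) x \<ge> 0"
proof
  assume "regular_at c x"
  then obtain p q where x: "poly q c \<noteq> 0" "x = Fract p q" by (metis regular_atE)
  moreover have "p \<noteq> 0" using assms x by (auto simp: Zero_fract_def eq_fract)
  moreover have "q \<noteq> 0" using x by auto
  ultimately show "place_val (Fin c) x \<ge> 0"
    by (simp add: place_val_Fract quotient_val_def order_0I)
next
  assume val: "place_val (Fin c) x \<ge> 0"
  obtain p q where x: "x = Fract p q" "q \<noteq> 0" "p \<noteq> 0" using Fract_cases_nonzero[of x] assms by metis
  obtain q' where q': "q = [:-c, 1:] ^ order c q * q'" "\<not> [:-c, 1:] dvd q'"
    using order_decomp[OF x(2)] by blast
  have "order c q \<le> order c p" using val x by (simp add: place_val_Fract quotient_val_def)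
  hence "[:-c, 1:] ^ order c q dvd p" by (simp add: order_divides)
  then obtain p' where p': "p = [:-c, 1:] ^ order c q * p'" by (elim dvdE)
  have "q' \<noteq> 0" using q' x by auto
  hence "x = Fract p' q'" using x p' q' by (simp add: eq_fract)
  moreover have "poly q' c \<noteq> 0" using q' by (simp add: poly_eq_0_iff_dvd)
  ultimately show "regular_at c x" unfolding regular_at_def by blast
qed

lemma eval_at_eq_0_iff_place_val_pos:
  assumes "regular_at c x" "x \<noteq> 0"
  shows "eval_at c x = 0 \<longleftrightarrow> place_val (Fin c) x > 0"
proof -
  obtain p q where x: "poly q c \<noteq> 0" "x = Fract p q" "eval_at c x = poly p c / poly q c"
    using assms by (metis regular_atE)
  moreover have "p \<noteq> 0" using assms x by (auto simp: Zero_fract_def eq_fract)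
  moreover have "q \<noteq> 0" using x by auto
  ultimately show ?thesis
    by (simp add: place_val_Fract quotient_val_def order_0I order_gt_0_iff)
qed

lemma vanishes_at_iff_eval_at_eq_0:
  assumes "regular_at c x"
  shows "vanishes_at (Fin c) x \<longleftrightarrow> eval_at c x = 0"
  using eval_at_eq_0_iff_place_val_pos[OF assms] regular_at_0 by (auto simp: vanishes_at_def)

section \<open>The polynomials \<open>f\<^sup>m(z) - z\<close>\<close>

definition periodic_poly :: "nat \<Rightarrow> 'a::field poly fract poly" where
  "periodic_poly m = fiter m - [:0, 1:]"

lemma poly_periodic_poly: "poly (periodic_poly m) z = poly (fiter m) z - z"
  by (simp add: periodic_poly_def)

lemma periodic_poly_0: "periodic_poly 0 = 0"
  by (simp add: periodic_poly_def)

lemma regular_at_poly_fiter: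
  "regular_at c z \<Longrightarrow>
     regular_at c (poly (fiter m) z) \<and> eval_at c (poly (fiter m) z) = ((\<lambda>w. w\<^sup>2 + c) ^^ m) (eval_at c z)"
  by (induction m) (simp_all add: regular_at_power regular_at_tvar regular_at_add)

lemma fiter_add: "(fiter (m + k) :: 'a::field poly fract poly) = pcompose (fiter k) (fiter m)"
proof (induction k)
  case 0 thus ?case by (simp add: pcompose_pCons)
next
  case (Suc k)
  have "(fiter (m + Suc k) :: 'a poly fract poly) = (fiter (m + k))\<^sup>2 + [:tvar:]" by simp
  also have "\<dots> = pcompose ((fiter k)\<^sup>2 + [:tvar:]) (fiter m)"
    by (simp only: Suc.IH power2_eq_square pcompose_mult pcompose_add pcompose_const)
  finally show ?case by simp
qed

lemma degree_fiter:
  "degree (fiter m :: 'a::field poly fract poly) = 2 ^ m \<and> lead_coeff (fiter m :: 'a poly fract poly) = 1"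
proof (induction m)
  case (Suc m)
  let ?g = "fiter m :: 'a poly fract poly"
  have "?g \<noteq> 0" using Suc by auto
  hence deg: "degree (?g\<^sup>2) = 2 ^ Suc m" using Suc by (simp add: degree_power_eq)
  hence lt: "degree [:tvar:] < degree (?g\<^sup>2)" by simp
  have "lead_coeff (?g\<^sup>2) = 1" using Suc by (metis lead_coeff_power power_one)
  thus ?case
    using deg lt degree_add_eq_left[OF lt] lead_coeff_add_le[OF lt] by (simp add: add.commute)
qed simp

lemma periodic_poly_monic:
  assumes "m \<ge> 1"
  shows "degree (periodic_poly m :: 'a::field poly fract poly) = 2 ^ m
    \<and> lead_coeff (periodic_poly m :: 'a poly fract poly) = 1"
proof -
  have "(2::nat) ^ 1 \<le> 2 ^ m" using assms by (intro power_increasing) auto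
  hence lt: "degree (- [:0, 1:] :: 'a poly fract poly) < degree (fiter m :: 'a poly fract poly)"
    using degree_fiter[of m, where 'a='a] by simp
  have "(periodic_poly m :: 'a poly fract poly) = fiter m + (- [:0, 1:])"
    by (simp add: periodic_poly_def)
  moreover have "degree (fiter m + (- [:0, 1:]) :: 'a poly fract poly) = degree (fiter m :: 'a poly fract poly)"
    using lt by (rule degree_add_eq_left)
  moreover have "lead_coeff (fiter m + (- [:0, 1:]) :: 'a poly fract poly) = lead_coeff (fiter m :: 'a poly fract poly)"
    using lt by (metis add.commute lead_coeff_add_le)
  ultimately show ?thesis using degree_fiter[of m, where 'a='a] by auto
qed

lemma periodic_poly_nonzero: "m \<ge> 1 \<Longrightarrow> (periodic_poly m :: 'a::field poly fract poly) \<noteq> 0"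
  using periodic_poly_monic[of m, where 'a='a] by auto

definition coeffs_regular_at :: "'a::field \<Rightarrow> 'a poly fract poly \<Rightarrow> bool" where
  "coeffs_regular_at c h \<longleftrightarrow> (\<forall>i. regular_at c (coeff h i))"

definition reduce_poly :: "'a::field \<Rightarrow> 'a poly fract poly \<Rightarrow> 'a poly" where
  "reduce_poly c h = map_poly (eval_at c) h"

lemma coeff_reduce_poly: "coeff (reduce_poly c h) i = eval_at c (coeff h i)"
  unfolding reduce_poly_def by (simp add: coeff_map_poly regular_at_0)

lemma coeffs_regular_at_add:
  "coeffs_regular_at c g \<Longrightarrow> coeffs_regular_at c h \<Longrightarrow>
     coeffs_regular_at c (g + h) \<and> reduce_poly c (g + h) = reduce_poly c g + reduce_poly c h"
  by (auto simp: coeffs_regular_at_def regular_at_add coeff_reduce_poly intro!: poly_eqI)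

lemma coeffs_regular_at_diff:
  "coeffs_regular_at c g \<Longrightarrow> coeffs_regular_at c h \<Longrightarrow>
     coeffs_regular_at c (g - h) \<and> reduce_poly c (g - h) = reduce_poly c g - reduce_poly c h"
  by (auto simp: coeffs_regular_at_def regular_at_diff coeff_reduce_poly intro!: poly_eqI)

lemma coeffs_regular_at_mult:
  assumes "coeffs_regular_at c g" "coeffs_regular_at c h"
  shows "coeffs_regular_at c (g * h) \<and> reduce_poly c (g * h) = reduce_poly c g * reduce_poly c h"
proof -
  have "regular_at c (coeff (g * h) n) \<and> eval_at c (coeff (g * h) n) = coeff (reduce_poly c g * reduce_poly c h) n"
    for n
    using assms regular_at_sum[of "{..n}" c "\<lambda>i. coeff g i * coeff h (n - i)"]
    by (simp add: coeffs_regular_at_def regular_at_mult coeff_mult coeff_reduce_poly)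
  thus ?thesis by (auto simp: coeffs_regular_at_def coeff_reduce_poly intro!: poly_eqI)
qed

lemma coeffs_regular_at_const:
  "regular_at c a \<Longrightarrow> coeffs_regular_at c [:a:] \<and> reduce_poly c [:a:] = [:eval_at c a:]"
  by (auto simp: coeffs_regular_at_def coeff_reduce_poly coeff_pCons regular_at_0
      split: nat.split intro!: poly_eqI)

lemma coeffs_regular_at_X: "coeffs_regular_at c [:0, 1:] \<and> reduce_poly c [:0, 1:] = [:0, 1:]"
  by (auto simp: coeffs_regular_at_def coeff_reduce_poly coeff_pCons regular_at_0 regular_at_1
      split: nat.split intro!: poly_eqI)

lemma coeffs_regular_at_power:
  "coeffs_regular_at c h \<Longrightarrow> coeffs_regular_at c (h ^ n) \<and> reduce_poly c (h ^ n) = reduce_poly c h ^ n"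
proof (induction n)
  case 0
  thus ?case using coeffs_regular_at_const[of c 1] regular_at_1[of c] by (simp add: one_pCons)
qed (simp add: coeffs_regular_at_mult)

lemma reduce_poly_monic:
  assumes "coeffs_regular_at c h" "lead_coeff h = 1"
  shows "degree (reduce_poly c h) = degree h"
proof -
  have "coeff (reduce_poly c h) (degree h) = 1" using assms by (simp add: coeff_reduce_poly regular_at_1)
  moreover have "\<forall>i>degree h. coeff (reduce_poly c h) i = 0"
    by (simp add: coeff_reduce_poly coeff_eq_0 regular_at_0)
  ultimately show ?thesis by (metis degree_le le_antisym le_degree zero_neq_one)
qed

fun iter_poly :: "'a::field \<Rightarrow> nat \<Rightarrow> 'a poly" where
  "iter_poly c 0 = [:0, 1:]"
| "iter_poly c (Suc m) = (iter_poly c m)\<^sup>2 + [:c:]"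

lemma iter_poly_0: "iter_poly 0 m = monom 1 (2 ^ m)"
  by (induction m) (simp_all add: monom_Suc monom_0 power2_eq_square mult_monom mult_2)

lemma reduce_poly_periodic_poly:
  "coeffs_regular_at c (periodic_poly m) \<and> reduce_poly c (periodic_poly m) = iter_poly c m - [:0, 1:]"
proof -
  have "coeffs_regular_at c (fiter m) \<and> reduce_poly c (fiter m) = iter_poly c m"
  proof (induction m)
    case (Suc m)
    thus ?case using coeffs_regular_at_power[of c "fiter m" 2] coeffs_regular_at_const[of c tvar]
      regular_at_tvar[of c] coeffs_regular_at_add[of c "(fiter m)\<^sup>2" "[:tvar:]"] by simp
  qed (simp add: coeffs_regular_at_X)
  thus ?thesis using coeffs_regular_at_X[of c] coeffs_regular_at_diff[of c "fiter m" "[:0, 1:]"]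
    by (simp add: periodic_poly_def)
qed

definition min_coeff_val :: "'a::field \<Rightarrow> 'a poly fract poly \<Rightarrow> int" where
  "min_coeff_val c h = Min ((\<lambda>i. place_val (Fin c) (coeff h i)) ` {i. coeff h i \<noteq> 0})"

lemma finite_nonzero_coeffs: "finite {i. coeff h i \<noteq> 0}"
  by (rule finite_subset[of _ "{..degree h}"]) (auto intro: le_degree)

lemma min_coeff_val_le: "coeff h i \<noteq> 0 \<Longrightarrow> min_coeff_val c h \<le> place_val (Fin c) (coeff h i)"
  unfolding min_coeff_val_def by (rule Min_le) (auto intro: finite_nonzero_coeffs)

lemma min_coeff_val_attained:
  assumes "h \<noteq> 0"
  obtains i where "coeff h i \<noteq> 0" "place_val (Fin c) (coeff h i) = min_coeff_val c h"
proof -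
  have "{i. coeff h i \<noteq> 0} \<noteq> {}" using assms by (auto simp: poly_eq_iff)
  hence "min_coeff_val c h \<in> (\<lambda>i. place_val (Fin c) (coeff h i)) ` {i. coeff h i \<noteq> 0}"
    unfolding min_coeff_val_def by (intro Min_in) (simp_all add: finite_nonzero_coeffs)
  thus ?thesis using that by auto
qed

lemma coeffs_regular_at_if_min_coeff_val_nonneg:
  assumes "min_coeff_val c h \<ge> 0"
  shows "coeffs_regular_at c h"
  unfolding coeffs_regular_at_def
proof
  fix i show "regular_at c (coeff h i)"
    using assms min_coeff_val_le[of h i c] regular_at_iff_place_val_nonneg[of "coeff h i" c]
    by (cases "coeff h i = 0") (simp_all add: regular_at_0)
qed

definition uniformizer :: "'a::field \<Rightarrow> 'a poly fract" where
  "uniformizer c = Fract [:-c, 1:] 1"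

lemma uniformizer_nonzero: "uniformizer c \<noteq> 0"
  by (simp add: uniformizer_def Zero_fract_def eq_fract)

lemma place_val_uniformizer_power: "place_val (Fin c) (uniformizer c ^ a) = int a"
  using place_val_power[OF uniformizer_nonzero[of c], of "Fin c" a] order_power_n_n[of c 1]
  by (simp add: uniformizer_def place_val_Fract quotient_val_def)

lemma primitive_scaling:
  fixes h :: "'a::field poly fract poly"
  assumes "h \<noteq> 0" "min_coeff_val c h \<le> 0"
  defines "a \<equiv> nat (- min_coeff_val c h)"
  shows "coeffs_regular_at c (smult (uniformizer c ^ a) h)
    \<and> reduce_poly c (smult (uniformizer c ^ a) h) \<noteq> 0"
proof -
  have a: "int a = - min_coeff_val c h" using assms(2) by (simp add: a_def)
  have nz: "uniformizer c ^ a \<noteq> 0" by (simp add: uniformizer_nonzero)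
  have val: "place_val (Fin c) (uniformizer c ^ a * coeff h i) = place_val (Fin c) (coeff h i) - min_coeff_val c h"
    if "coeff h i \<noteq> 0" for i
    using place_val_mult[OF nz that] place_val_uniformizer_power[of c a] a by simp
  have reg: "regular_at c (uniformizer c ^ a * coeff h i)" for i
    using val[of i] min_coeff_val_le[of h i c] nz
      regular_at_iff_place_val_nonneg[of "uniformizer c ^ a * coeff h i" c]
    by (cases "coeff h i = 0") (simp_all add: regular_at_0)
  obtain i where i: "coeff h i \<noteq> 0" "place_val (Fin c) (coeff h i) = min_coeff_val c h"
    using min_coeff_val_attained[OF assms(1)] by blast
  have "eval_at c (uniformizer c ^ a * coeff h i) \<noteq> 0"
    using eval_at_eq_0_iff_place_val_pos[OF reg] val[OF i(1)] i nz by simp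
  hence "coeff (reduce_poly c (smult (uniformizer c ^ a) h)) i \<noteq> 0" by (simp add: coeff_reduce_poly)
  thus ?thesis using reg by (auto simp: coeffs_regular_at_def)
qed

lemma min_coeff_val_monic: "lead_coeff h = 1 \<Longrightarrow> min_coeff_val c h \<le> 0"
  using min_coeff_val_le[of h "degree h" c] by (simp add: place_val_1)

lemma reduce_poly_smult_uniformizer:
  fixes F :: "'a::field poly fract poly"
  assumes F: "coeffs_regular_at c F" and "k > 0"
  shows "reduce_poly c (smult (uniformizer c ^ k) F) = 0"
proof -
  have nz: "uniformizer c ^ k \<noteq> 0" by (simp add: uniformizer_nonzero)
  have "eval_at c (uniformizer c ^ k * coeff F i) = 0" for i
  proof (cases "coeff F i = 0")
    case False
    hence nz': "uniformizer c ^ k * coeff F i \<noteq> 0" using nz by simp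
    have "place_val (Fin c) (coeff F i) \<ge> 0"
      using F False regular_at_iff_place_val_nonneg[OF False, of c] by (simp add: coeffs_regular_at_def)
    moreover have "place_val (Fin c) (uniformizer c ^ k * coeff F i) = int k + place_val (Fin c) (coeff F i)"
      using place_val_mult[OF nz False] place_val_uniformizer_power[of c k] by simp
    ultimately have pos: "place_val (Fin c) (uniformizer c ^ k * coeff F i) > 0"
      using assms(2) by linarith
    hence "regular_at c (uniformizer c ^ k * coeff F i)"
      using regular_at_iff_place_val_nonneg[OF nz'] by simp
    thus ?thesis using eval_at_eq_0_iff_place_val_pos[OF _ nz'] pos by simp
  qed (simp add: regular_at_0)
  thus ?thesis by (auto simp: coeff_reduce_poly intro!: poly_eqI)
qed

text \<open>Gauss's lemma over the local ring at \<open>t = c\<close>: otherwise the primitive scalings of the two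
  factors would have a nonzero product of reductions, although that product is the reduction of a
  positive power of the uniformizer times \<open>F\<close>.\<close>

lemma coeffs_regular_at_monic_factor:
  fixes F G H :: "'a::field poly fract poly"
  assumes F: "coeffs_regular_at c F" and eq: "F = G * H"
    and monic: "lead_coeff G = 1" "lead_coeff H = 1"
  shows "coeffs_regular_at c G"
proof -
  have nz: "G \<noteq> 0" "H \<noteq> 0" using monic by auto
  define a where "a = nat (- min_coeff_val c G)"
  define b where "b = nat (- min_coeff_val c H)"
  have G: "coeffs_regular_at c (smult (uniformizer c ^ a) G) \<and> reduce_poly c (smult (uniformizer c ^ a) G) \<noteq> 0"
    using primitive_scaling[OF nz(1) min_coeff_val_monic[OF monic(1)]] by (simp add: a_def)
  have H: "coeffs_regular_at c (smult (uniformizer c ^ b) H) \<and> reduce_poly c (smult (uniformizer c ^ b) H) \<noteq> 0"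
    using primitive_scaling[OF nz(2) min_coeff_val_monic[OF monic(2)]] by (simp add: b_def)
  have "smult (uniformizer c ^ (a + b)) F = smult (uniformizer c ^ a) G * smult (uniformizer c ^ b) H"
    using eq by (simp add: power_add mult.commute mult.left_commute)
  hence "reduce_poly c (smult (uniformizer c ^ (a + b)) F) \<noteq> 0"
    using coeffs_regular_at_mult[of c "smult (uniformizer c ^ a) G" "smult (uniformizer c ^ b) H"] G H
    by simp
  hence "a = 0" using reduce_poly_smult_uniformizer[OF F, of "a + b"] by (cases "a + b") auto
  hence "min_coeff_val c G \<ge> 0" by (simp add: a_def)
  thus ?thesis by (rule coeffs_regular_at_if_min_coeff_val_nonneg)
qed

lemma monom_minus_X_no_double_root:
  fixes x :: "'a::field_char_0"
  assumes "m \<ge> 1"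
  shows "\<not> [:-x, 1:]\<^sup>2 dvd monom 1 (2 ^ m) - [:0, 1:]"
proof
  define k :: nat where "k = 2 ^ m"
  have k2: "k \<ge> 2" using assms unfolding k_def
    by (metis power_increasing power_one_right one_le_numeral)
  assume "[:-x, 1:]\<^sup>2 dvd monom 1 (2 ^ m) - [:0, 1:]"
  then obtain R where R: "monom 1 k - [:0, 1:] = [:-x, 1:]\<^sup>2 * R" by (auto simp: k_def elim: dvdE)
  have "x ^ k = x" using arg_cong[OF R, of "\<lambda>p. poly p x"] by (simp add: poly_monom)
  moreover have "poly (pderiv ([:-x, 1:]\<^sup>2 * R)) x = 0"
    by (simp only: pderiv_mult poly_add poly_mult power2_eq_square) (simp add: pderiv_pCons)
  hence "of_nat k * x ^ (k - 1) = 1"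
    using arg_cong[OF R, of "\<lambda>p. poly (pderiv p) x"]
    by (simp add: pderiv_diff pderiv_monom poly_monom pderiv_pCons)
  moreover have "x ^ k = x * x ^ (k - 1)" using k2 by (simp add: power_eq_if)
  ultimately have "x ^ (k - 1) = 1" and "(of_nat k :: 'a) = 1"
    using k2 by (auto simp: power_0_left)
  thus False using k2 by (metis of_nat_1 of_nat_eq_iff numeral_le_one_iff semiring_norm(69))
qed

lemma periodic_poly_squarefree:
  fixes p :: "'a::{alg_closed_field, field_char_0} poly fract poly"
  assumes m: "m \<ge> 1" and deg: "degree p > 0"
  shows "\<not> p\<^sup>2 dvd periodic_poly m"
proof
  assume "p\<^sup>2 dvd periodic_poly m"
  then obtain G where G: "periodic_poly m = p\<^sup>2 * G" by (elim dvdE)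
  define l where "l = lead_coeff p"
  have l0: "l \<noteq> 0" using deg l_def by auto
  define p' where "p' = smult (inverse l) p"
  define G' where "G' = smult (l\<^sup>2) G"
  have eq: "periodic_poly m = p'\<^sup>2 * G'" using G l0 by (simp add: p'_def G'_def power2_eq_square field_simps)
  have lp': "lead_coeff p' = 1" using l0 by (simp add: p'_def l_def)
  have lG': "lead_coeff G' = 1"
    using periodic_poly_monic[OF m, where 'a='a] eq lp' by (simp add: lead_coeff_mult lead_coeff_power)
  have reg: "coeffs_regular_at 0 (periodic_poly m :: 'a poly fract poly)"
    using reduce_poly_periodic_poly by blast
  have rp'2: "coeffs_regular_at 0 (p'\<^sup>2)"
    using coeffs_regular_at_monic_factor[OF reg eq] lp' lG' by (simp add: lead_coeff_power)
  have rp': "coeffs_regular_at 0 p'"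
    using coeffs_regular_at_monic_factor[OF rp'2, of p' p'] lp' by (simp add: power2_eq_square)
  have rG': "coeffs_regular_at 0 G'"
    using coeffs_regular_at_monic_factor[OF reg, of G' "p'\<^sup>2"] eq lp' lG' by (simp add: lead_coeff_power mult.commute)
  have "degree (reduce_poly 0 p') > 0" using reduce_poly_monic[OF rp' lp'] deg l0 by (simp add: p'_def)
  then obtain x where "poly (reduce_poly 0 p') x = 0" using alg_closed_imp_poly_has_root by blast
  hence "[:-x, 1:] dvd reduce_poly 0 p'" by (simp add: poly_eq_0_iff_dvd)
  hence "[:-x, 1:]\<^sup>2 dvd (reduce_poly 0 p')\<^sup>2 * reduce_poly 0 G'" by (simp add: dvd_mult2 dvd_power_same)
  moreover have "reduce_poly 0 (periodic_poly m) = (reduce_poly 0 p')\<^sup>2 * reduce_poly 0 G'"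
    using eq coeffs_regular_at_mult[OF conjunct1[OF coeffs_regular_at_power[OF rp', of 2]] rG']
      coeffs_regular_at_power[OF rp', of 2] by simp
  moreover have "reduce_poly 0 (periodic_poly m :: 'a poly fract poly) = monom 1 (2 ^ m) - [:0, 1:]"
    using reduce_poly_periodic_poly[where 'a='a, of 0 m] by (simp add: iter_poly_0)
  ultimately show False using monom_minus_X_no_double_root[OF m] by metis
qed

section \<open>Exactness of the division defining \<open>\<Phi>\<^sub>n\<close>\<close>

text \<open>Giving the field \<open>K(t)\<close> the trivial Euclidean structure, as \<open>Field_as_Ring\<close> does for
  \<open>\<rat>\<close>, \<open>\<real>\<close> and \<open>\<complex>\<close>, makes \<open>K(t)[z]\<close> a factorial ring.\<close>

instantiation fract :: (idom)
  "{unique_euclidean_ring, normalization_euclidean_semiring, normalization_semidom_multiplicative}"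
begin
definition [simp]: "normalize_fract = (normalize_field :: 'a fract \<Rightarrow> _)"
definition [simp]: "unit_factor_fract = (unit_factor_field :: 'a fract \<Rightarrow> _)"
definition [simp]: "modulo_fract = (mod_field :: 'a fract \<Rightarrow> _)"
definition [simp]: "euclidean_size_fract = (euclidean_size_field :: 'a fract \<Rightarrow> _)"
definition [simp]: "division_segment (x :: 'a fract) = 1"
instance
  by standard (simp_all add: dvd_field_iff field_split_simps split: if_splits)
end

instantiation fract :: (idom) euclidean_ring_gcd
begin
definition gcd_fract :: "'a fract \<Rightarrow> 'a fract \<Rightarrow> 'a fract" where
  "gcd_fract = Euclidean_Algorithm.gcd"
definition lcm_fract :: "'a fract \<Rightarrow> 'a fract \<Rightarrow> 'a fract" where
  "lcm_fract = Euclidean_Algorithm.lcm"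
definition Gcd_fract :: "'a fract set \<Rightarrow> 'a fract" where
  "Gcd_fract = Euclidean_Algorithm.Gcd"
definition Lcm_fract :: "'a fract set \<Rightarrow> 'a fract" where
  "Lcm_fract = Euclidean_Algorithm.Lcm"
instance by standard (simp_all add: gcd_fract_def lcm_fract_def Gcd_fract_def Lcm_fract_def)
end

instance fract :: (idom) field_gcd ..

lemma dvd_ge_1: "m dvd n \<Longrightarrow> n \<ge> 1 \<Longrightarrow> m \<ge> (1::nat)"
  by (cases m) auto

lemma diff_dvd_pcompose_diff: "p - q dvd pcompose h p - pcompose h (q :: 'a::comm_ring_1 poly)"
proof (induction h)
  case (pCons a h)
  have "pcompose (pCons a h) p - pcompose (pCons a h) q = p * (pcompose h p - pcompose h q) + (p - q) * pcompose h q"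
    by (simp add: pcompose_pCons algebra_simps)
  thus ?case using pCons.IH by simp
qed simp

lemma periodic_poly_dvd_fiter_diff:
  "periodic_poly a dvd (fiter (a + k) - fiter k :: 'a::field poly fract poly)"
  using diff_dvd_pcompose_diff[of "fiter a" "[:0, 1:]" "fiter k"] by (simp add: fiter_add periodic_poly_def)

lemma dvd_periodic_poly_add:
  fixes p :: "'a::field poly fract poly"
  assumes "p dvd periodic_poly a" "p dvd periodic_poly b"
  shows "p dvd periodic_poly (a + b)"
proof -
  have "(periodic_poly (a + b) :: 'a poly fract poly) = (fiter (a + b) - fiter b) + periodic_poly b"
    by (simp add: periodic_poly_def)
  thus ?thesis using assms dvd_trans[OF assms(1) periodic_poly_dvd_fiter_diff[of a b]] by (metis dvd_add)
qed

lemma dvd_periodic_poly_diff: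
  fixes p :: "'a::field poly fract poly"
  assumes "p dvd periodic_poly a" "p dvd periodic_poly (a + k)"
  shows "p dvd periodic_poly k"
proof -
  have "(periodic_poly k :: 'a poly fract poly) = periodic_poly (a + k) - (fiter (a + k) - fiter k)"
    by (simp add: periodic_poly_def)
  thus ?thesis using assms dvd_trans[OF assms(1) periodic_poly_dvd_fiter_diff[of a k]] by (metis dvd_diff)
qed

lemma nat_set_eq_multiples:
  fixes S :: "nat set"
  assumes add: "\<And>a b. a \<in> S \<Longrightarrow> b \<in> S \<Longrightarrow> a + b \<in> S"
    and diff: "\<And>a k. a \<in> S \<Longrightarrow> a + k \<in> S \<Longrightarrow> k \<in> S"
    and S: "0 \<in> S" "n \<in> S" and n: "n > 0" "\<And>m. 0 < m \<Longrightarrow> m < n \<Longrightarrow> m \<notin> S"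
  shows "m \<in> S \<longleftrightarrow> n dvd m"
proof -
  have mult: "n * q \<in> S" for q
    by (induction q) (simp_all add: S add)
  have "m mod n \<in> S" if "m \<in> S"
    using diff[OF mult[of "m div n"]] that by simp
  moreover have "m mod n < n" using n by simp
  ultimately show ?thesis using n(2) mult by (auto simp: dvd_eq_mod_eq_0 intro: gr0I elim!: dvdE)
qed

lemma dvd_periodic_poly_iff_dvd:
  fixes p :: "'a::field poly fract poly"
  assumes "m \<ge> 1" "p dvd periodic_poly m"
  obtains n where "n > 0" "\<And>m. p dvd periodic_poly m \<longleftrightarrow> n dvd m"
proof -
  define S where "S = {m. p dvd periodic_poly m}"
  define n where "n = (LEAST m. m > 0 \<and> m \<in> S)"
  have n: "n > 0 \<and> n \<in> S"
    unfolding n_def using LeastI[of "\<lambda>m. m > 0 \<and> m \<in> S" m] assms by (simp add: S_def)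
  have "m \<in> S \<longleftrightarrow> n dvd m" for m
  proof (rule nat_set_eq_multiples)
    show "a + b \<in> S" if "a \<in> S" "b \<in> S" for a b
      using that dvd_periodic_poly_add by (auto simp: S_def)
    show "k \<in> S" if "a \<in> S" "a + k \<in> S" for a k
      using that dvd_periodic_poly_diff by (auto simp: S_def)
    show "m \<notin> S" if "0 < m" "m < n" for m
      using that not_less_Least[of m "\<lambda>m. m > 0 \<and> m \<in> S"] n_def by auto
  qed (use n in \<open>simp_all add: S_def periodic_poly_0\<close>)
  thus ?thesis using n that by (auto simp: S_def)
qed

lemma multiplicity_periodic_poly:
  fixes p :: "'a::{alg_closed_field, field_char_0} poly fract poly"
  assumes "m \<ge> 1" "prime p"
  shows "multiplicity p (periodic_poly m) = of_bool (p dvd periodic_poly m)"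
proof (cases "p dvd periodic_poly m")
  case True
  have nz: "periodic_poly m \<noteq> 0" and nu: "\<not> is_unit p"
    using periodic_poly_nonzero[OF assms(1)] assms(2) by auto
  have "degree p > 0" using assms(2) is_unit_iff_degree[of p] by fastforce
  hence "\<not> 2 \<le> multiplicity p (periodic_poly m)"
    using power_dvd_iff_le_multiplicity[OF nz nu, of 2] periodic_poly_squarefree[OF assms(1)] by blast
  moreover have "multiplicity p (periodic_poly m) > 0" using True multiplicity_gt_zero_iff[OF nz nu] by simp
  ultimately show ?thesis using True by simp
qed (simp add: not_dvd_imp_multiplicity_0)

lemma multiplicity_prod_periodic_poly:
  fixes p :: "'a::{alg_closed_field, field_char_0} poly fract poly"
  assumes "prime p" "n \<ge> 1" "T \<subseteq> {m. m dvd n}"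
  shows "multiplicity p (\<Prod>m\<in>T. periodic_poly m) = card {m\<in>T. p dvd periodic_poly m}"
proof -
  have fin: "finite T" using assms by (auto intro: finite_subset)
  have pos: "m \<ge> 1" if "m \<in> T" for m
    using that assms dvd_ge_1 by blast
  have "0 \<notin> (periodic_poly :: nat \<Rightarrow> 'a poly fract poly) ` T"
    using periodic_poly_nonzero pos by fastforce
  hence "multiplicity p (\<Prod>m\<in>T. periodic_poly m) = (\<Sum>m\<in>T. multiplicity p (periodic_poly m))"
    using assms(1) fin by (intro prime_elem_multiplicity_prod_distrib) auto
  also have "\<dots> = (\<Sum>m\<in>T. of_bool (p dvd periodic_poly m))"
    using pos multiplicity_periodic_poly[OF _ assms(1)] by (intro sum.cong) auto
  finally show ?thesis using fin by (simp add: Collect_conj_eq Int_commute)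
qed

lemma moebius_mult_prime:
  fixes p d :: nat
  assumes p: "prime p" and "\<not> p dvd d" "d > 0"
  shows "moebius (p * d) = - moebius d"
proof -
  have cop: "coprime p d" using assms by (simp add: prime_imp_coprime)
  have "squarefree (p * d) \<longleftrightarrow> squarefree d"
    using squarefree_multD(2)[of p d] squarefree_mult_coprime[OF cop squarefree_prime[OF p]] by blast
  moreover have "prime_factors (p * d) = insert p (prime_factors d)"
    using prime_factors_product[of p d] assms prime_prime_factors[OF p] by (auto simp: prime_gt_0_nat)
  moreover have "p \<notin> prime_factors d" using assms by (auto dest: in_prime_factors_imp_dvd)
  ultimately show ?thesis by (simp add: moebius_def)
qed

lemma sum_moebius_divisors:
  fixes k :: nat
  assumes "k > 1"
  shows "(\<Sum>d | d dvd k. moebius d) = 0"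
proof -
  obtain p where p: "prime p" "p dvd k" using prime_factor_nat[of k] assms by auto
  define D0 where "D0 = {d. d dvd k \<and> \<not> p dvd d}"
  define D1 where "D1 = {d. d dvd k \<and> p dvd d}"
  have fin: "finite D0" "finite D1" using assms by (auto simp: D0_def D1_def)
  have "{d. d dvd k} = D0 \<union> D1" "D0 \<inter> D1 = {}" by (auto simp: D0_def D1_def)
  hence split: "(\<Sum>d | d dvd k. moebius d) = sum moebius D0 + sum moebius D1"
    using sum.union_disjoint[OF fin] by simp
  text \<open>\<open>d \<mapsto> p d\<close> maps \<open>D0\<close> into \<open>D1\<close>, reversing the sign of \<open>\<mu>\<close>; \<open>\<mu>\<close> vanishes off its image.\<close>
  define I where "I = (\<lambda>d. p * d) ` D0"
  have "I \<subseteq> D1"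
    using p by (auto simp: I_def D0_def D1_def prime_imp_coprime divides_mult)
  moreover have "moebius x = 0" if "x \<in> D1 - I" for x
  proof -
    from that have "x dvd k" "p dvd x" by (auto simp: D1_def)
    then obtain e where e: "x = p * e" "e dvd k" by (metis dvdE dvd_mult_right)
    hence "p dvd e" using that by (auto simp: I_def D0_def)
    hence "p\<^sup>2 dvd x" using e by (auto simp: power2_eq_square)
    hence "\<not> squarefree x" using p(1) by (auto simp: squarefree_def)
    thus ?thesis by (simp add: moebius_def)
  qed
  ultimately have "sum moebius D1 = sum moebius I"
    using fin by (metis add.right_neutral sum.mono_neutral_cong_left)
  also have "\<dots> = (\<Sum>d\<in>D0. moebius (p * d))"
    unfolding I_def using p(1) by (subst sum.reindex) (auto simp: inj_on_def prime_gt_0_nat)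
  also have "\<dots> = - sum moebius D0"
    using moebius_mult_prime[OF p(1)] assms
    by (simp add: sum_negf[symmetric] D0_def) (intro sum.cong; auto intro: dvd_pos_nat)
  finally show ?thesis using split by simp
qed

definition moebius_pos_divisors :: "nat \<Rightarrow> nat set" where
  "moebius_pos_divisors n = {m. m dvd n \<and> moebius (n div m) = 1}"

definition moebius_neg_divisors :: "nat \<Rightarrow> nat set" where
  "moebius_neg_divisors n = {m. m dvd n \<and> moebius (n div m) = -1}"

text \<open>The divisors of \<open>n = d k\<close> that are multiples of \<open>d\<close> correspond to the divisors of \<open>k\<close>
  via \<open>m \<mapsto> n / m\<close>.\<close>

lemma sum_moebius_multiples:
  fixes n d k :: nat
  assumes k: "n = d * k" and n: "n \<ge> 1"
  shows "(\<Sum>m | m dvd n \<and> d dvd m. moebius (n div m)) = (\<Sum>e | e dvd k. moebius e)"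
proof (rule sum.reindex_bij_witness[where i = "\<lambda>e. n div e" and j = "\<lambda>m. n div m"])
  fix m assume "m \<in> {m. m dvd n \<and> d dvd m}"
  then obtain q j where q: "n = m * q" and j: "m = d * j" by (auto elim!: dvdE)
  have "q > 0" "m > 0" using q n by (auto intro: gr0I)
  hence nm: "n div m = q" using q by simp
  thus "n div (n div m) = m" using q \<open>q > 0\<close> by simp
  have "d * k = d * (j * q)" using k q j by (metis mult.assoc)
  moreover have "d \<noteq> 0" using n k by auto
  ultimately have "k = j * q" by simp
  thus "n div m \<in> {e. e dvd k}" using nm by simp
next
  fix e assume "e \<in> {e. e dvd k}"
  then obtain f where f: "k = e * f" by (auto elim!: dvdE)
  have "e > 0" "f > 0" "d > 0" using f k n by (auto intro: gr0I)
  have "n = (d * f) * e" using k f by (simp add: algebra_simps)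
  hence "n div e = d * f" "n div (d * f) = e" using \<open>e > 0\<close> \<open>f > 0\<close> \<open>d > 0\<close> by simp_all
  thus "n div (n div e) = e" by simp
  show "n div e \<in> {m. m dvd n \<and> d dvd m}" using \<open>n div e = d * f\<close> \<open>n = (d * f) * e\<close> by simp
qed simp

lemma card_moebius_neg_multiples_le:
  fixes n d :: nat
  assumes "n \<ge> 1" "d \<ge> 1"
  shows "card {m \<in> moebius_neg_divisors n. d dvd m} \<le> card {m \<in> moebius_pos_divisors n. d dvd m}"
proof -
  define M where "M = {m. m dvd n \<and> d dvd m}"
  have fin: "finite M" using assms by (auto simp: M_def)
  have "(\<Sum>m\<in>M. moebius (n div m)) \<ge> 0"
  proof (cases "d dvd n")
    case True
    then obtain k where k: "n = d * k" by (elim dvdE)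
    have "k > 0" using k assms by (cases k) auto
    hence "(\<Sum>m\<in>M. moebius (n div m)) = (\<Sum>e | e dvd k. moebius e)"
      using sum_moebius_multiples[OF k] assms by (simp add: M_def)
    thus ?thesis
      using sum_moebius_divisors[of k] \<open>k > 0\<close> by (cases "k = 1") (auto simp: moebius_def)
  next
    case False
    hence "M = {}" by (auto simp: M_def dest: dvd_trans)
    thus ?thesis by simp
  qed
  also have "(\<Sum>m\<in>M. moebius (n div m))
      = (\<Sum>m\<in>M. of_bool (moebius (n div m) = 1)) - (\<Sum>m\<in>M. of_bool (moebius (n div m) = -1))"
    by (simp only: sum_subtractf[symmetric]) (intro sum.cong; auto simp: moebius_def minus_one_power_iff)
  also have "\<dots> = int (card {m \<in> moebius_pos_divisors n. d dvd m}) - int (card {m \<in> moebius_neg_divisors n. d dvd m})"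
    using fin by (simp add: M_def moebius_pos_divisors_def moebius_neg_divisors_def Int_def conj_ac)
  finally show ?thesis by simp
qed

definition dynatomic_num :: "nat \<Rightarrow> 'a::field poly fract poly" where
  "dynatomic_num n = (\<Prod>m\<in>moebius_pos_divisors n. periodic_poly m)"

definition dynatomic_den :: "nat \<Rightarrow> 'a::field poly fract poly" where
  "dynatomic_den n = (\<Prod>m\<in>moebius_neg_divisors n. periodic_poly m)"

lemma finite_moebius_divisors:
  "n \<ge> 1 \<Longrightarrow> finite (moebius_pos_divisors n)" "n \<ge> 1 \<Longrightarrow> finite (moebius_neg_divisors n)"
  by (auto simp: moebius_pos_divisors_def moebius_neg_divisors_def intro: finite_subset)

lemma dynatomic_den_dvd_num:
  assumes n: "n \<ge> 1"
  shows "(dynatomic_den n :: 'a::{alg_closed_field, field_char_0} poly fract poly) dvd dynatomic_num n"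
proof (rule multiplicity_le_imp_dvd)
  have pos: "m \<ge> 1" if "m \<in> moebius_neg_divisors n" for m
    using that dvd_ge_1[OF _ n] by (simp add: moebius_neg_divisors_def)
  show "(dynatomic_den n :: 'a poly fract poly) \<noteq> 0"
    using finite_moebius_divisors(2)[OF n] periodic_poly_nonzero[OF pos, where 'a='a]
    by (simp add: dynatomic_den_def)
  fix p :: "'a poly fract poly" assume p: "prime p"
  have "multiplicity p (dynatomic_num n) = card {m \<in> moebius_pos_divisors n. p dvd periodic_poly m}"
    unfolding dynatomic_num_def
    by (rule multiplicity_prod_periodic_poly[OF p n]) (auto simp: moebius_pos_divisors_def)
  moreover have "multiplicity p (dynatomic_den n) = card {m \<in> moebius_neg_divisors n. p dvd periodic_poly m}"
    unfolding dynatomic_den_def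
    by (rule multiplicity_prod_periodic_poly[OF p n]) (auto simp: moebius_neg_divisors_def)
  moreover have "card {m \<in> moebius_neg_divisors n. p dvd periodic_poly m}
      \<le> card {m \<in> moebius_pos_divisors n. p dvd periodic_poly m}"
  proof (cases "\<exists>m\<ge>1. p dvd periodic_poly m")
    case True
    then obtain m where m: "m \<ge> 1" "p dvd periodic_poly m" by blast
    obtain d where "d > 0" "\<And>m. p dvd periodic_poly m \<longleftrightarrow> d dvd m"
      using dvd_periodic_poly_iff_dvd[OF m] by blast
    thus ?thesis using card_moebius_neg_multiples_le[OF n, of d] by simp
  next
    case False
    have "\<not> p dvd periodic_poly m" if "m \<in> moebius_neg_divisors n" for m
      using False pos[OF that] by blast
    hence "{m \<in> moebius_neg_divisors n. p dvd periodic_poly m} = {}" by blast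
    thus ?thesis by (simp only: card.empty le0)
  qed
  ultimately show "multiplicity p (dynatomic_den n) \<le> multiplicity p (dynatomic_num n)" by simp
qed

lemma dynatomic_num_eq:
  "n \<ge> 1 \<Longrightarrow> (dynatomic_num n :: 'a::{alg_closed_field, field_char_0} poly fract poly)
     = dynatomic n * dynatomic_den n"
  using dynatomic_den_dvd_num[of n, where 'a='a]
  by (simp add: dynatomic_def dynatomic_num_def dynatomic_den_def periodic_poly_def
      moebius_pos_divisors_def moebius_neg_divisors_def)

section \<open>Portraits of type \<open>(1, N)\<close>\<close>

lemma exact_period_funpow_eq_iff:
  assumes "exact_period \<phi> y N"
  shows "(\<phi> ^^ m) y = y \<longleftrightarrow> N dvd m"
proof -
  have "(\<phi> ^^ m) y = (\<phi> ^^ (m mod N)) y"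
    using assms funpow_mod_eq[where f=\<phi> and n=N and x=y and m=m] by (simp add: exact_period_def)
  moreover have "m mod N < N" using assms by (simp add: exact_period_def)
  ultimately show ?thesis
    using assms by (auto simp: exact_period_def dvd_eq_mod_eq_0)
qed

lemma exact_period_exists:
  assumes "(\<phi> ^^ m) y = y" "m > 0"
  obtains n where "exact_period \<phi> y n"
proof -
  define n where "n = (LEAST n. n > 0 \<and> (\<phi> ^^ n) y = y)"
  have "n > 0 \<and> (\<phi> ^^ n) y = y"
    unfolding n_def using LeastI[of "\<lambda>n. n > 0 \<and> (\<phi> ^^ n) y = y"] assms by blast
  moreover have "(\<phi> ^^ k) y \<noteq> y" if "0 < k" "k < n" for k
    using that not_less_Least[of k "\<lambda>n. n > 0 \<and> (\<phi> ^^ n) y = y"] n_def by auto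
  ultimately show ?thesis using that by (auto simp: exact_period_def)
qed

lemma funpow_commute: "(f ^^ m) ((f ^^ n) x) = (f ^^ n) ((f ^^ m) x)"
  by (metis add.commute comp_apply funpow_add)

lemma funpow_image_eq_iff:
  assumes "(\<phi> ^^ M) y = y" "M > 0"
  shows "(\<phi> ^^ k) (\<phi> y) = \<phi> y \<longleftrightarrow> (\<phi> ^^ k) y = y"
proof
  obtain M' where M: "M = Suc M'" using assms(2) by (cases M) auto
  assume "(\<phi> ^^ k) (\<phi> y) = \<phi> y"
  hence "(\<phi> ^^ M') ((\<phi> ^^ k) (\<phi> y)) = (\<phi> ^^ M') (\<phi> y)" by simp
  thus "(\<phi> ^^ k) y = y"
    using assms(1) funpow_commute[where f=\<phi> and m=M' and n=k and x="\<phi> y"] by (simp add: M funpow_swap1)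
qed (metis funpow_swap1)

lemma exact_period_image_iff:
  assumes "is_periodic \<phi> y"
  shows "exact_period \<phi> (\<phi> y) N \<longleftrightarrow> exact_period \<phi> y N"
  using assms funpow_image_eq_iff[where \<phi>=\<phi> and y=y] by (auto simp: is_periodic_def exact_period_def)

lemma periodic_eq_if_image_eq:
  assumes "is_periodic \<phi> x" "is_periodic \<phi> y" "\<phi> x = \<phi> y"
  shows "x = y"
proof -
  obtain a b where ab: "a > 0" "(\<phi> ^^ a) x = x" "b > 0" "(\<phi> ^^ b) y = y"
    using assms(1,2) by (auto simp: is_periodic_def)
  obtain K where K: "a * b = Suc K" using ab by (cases "a * b") auto
  have "(\<phi> ^^ (a * b)) x = x" "(\<phi> ^^ (a * b)) y = y"
    using funpow_mod_eq[where f=\<phi> and n=a and x=x and m="a * b"]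
      funpow_mod_eq[where f=\<phi> and n=b and x=y and m="a * b"] ab by simp_all
  moreover have "(\<phi> ^^ (a * b)) z = (\<phi> ^^ K) (\<phi> z)" for z
    by (simp only: K funpow_Suc_right comp_apply)
  ultimately show ?thesis using assms(3) by metis
qed

lemma periodic_preimage_exists:
  assumes "is_periodic \<phi> w"
  obtains y where "is_periodic \<phi> y" "\<phi> y = w"
proof -
  obtain N where N: "(\<phi> ^^ Suc N) w = w" using assms by (auto simp: is_periodic_def gr0_conv_Suc)
  define y where "y = (\<phi> ^^ N) w"
  have "(\<phi> ^^ Suc N) y = y"
    using N funpow_commute[where f=\<phi> and m="Suc N" and n=N and x=w] by (simp only: y_def)
  hence "is_periodic \<phi> y" unfolding is_periodic_def by blast
  moreover have "\<phi> y = w" using N by (simp add: y_def funpow_swap1)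
  ultimately show thesis by (rule that)
qed

text \<open>\<open>x\<close> is strictly preperiodic of tail length one iff it is the non-periodic preimage of
  a periodic point; for \<open>z\<^sup>2 + c\<close> the other preimage of \<open>x\<^sup>2 + c\<close> is \<open>-x\<close>.\<close>

lemma has_portrait_1_iff:
  fixes c x :: "'a::field_char_0"
  shows "has_portrait (\<lambda>z. z\<^sup>2 + c) x 1 N \<longleftrightarrow> x \<noteq> 0 \<and> exact_period (\<lambda>z. z\<^sup>2 + c) (- x) N"
proof -
  let ?\<phi> = "\<lambda>z::'a. z\<^sup>2 + c"
  have periodic: "is_periodic ?\<phi> y" if "exact_period ?\<phi> y N" for y
    using that by (auto simp: is_periodic_def exact_period_def)
  show ?thesis
  proof
    assume "has_portrait ?\<phi> x 1 N"
    hence np: "\<not> is_periodic ?\<phi> x" and ep: "exact_period ?\<phi> (?\<phi> x) N"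
      by (auto simp: has_portrait_def)
    obtain y where per: "is_periodic ?\<phi> y" and img: "?\<phi> y = ?\<phi> x"
      using periodic_preimage_exists[OF periodic[OF ep]] by blast
    have "y \<noteq> x" using per np by blast
    moreover have "y\<^sup>2 = x\<^sup>2" using img by simp
    ultimately have y: "y = - x" by (simp add: power2_eq_iff)
    hence "x \<noteq> 0" using \<open>y \<noteq> x\<close> by auto
    thus "x \<noteq> 0 \<and> exact_period ?\<phi> (- x) N"
      using exact_period_image_iff[OF per] img ep y by simp
  next
    assume "x \<noteq> 0 \<and> exact_period ?\<phi> (- x) N"
    hence x: "x \<noteq> 0" and ep: "exact_period ?\<phi> (- x) N" by auto
    have img: "?\<phi> (- x) = ?\<phi> x" by simp
    have "exact_period ?\<phi> (?\<phi> x) N"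
      using exact_period_image_iff[OF periodic[OF ep]] ep img by simp
    moreover have "\<not> is_periodic ?\<phi> x"
    proof
      assume "is_periodic ?\<phi> x"
      hence "x = - x" using periodic_eq_if_image_eq[OF _ periodic[OF ep] img[symmetric]] by blast
      thus False using x by (simp add: eq_neg_iff_add_eq_0 mult_2[symmetric])
    qed
    ultimately show "has_portrait ?\<phi> x 1 N"
      using periodic by (simp add: has_portrait_def)
  qed
qed

section \<open>Valuations of \<open>\<Phi>\<^sub>n(-\<alpha>)\<close>\<close>

text \<open>\<open>moebius_sum n e\<close> is \<open>\<Sum>\<^sub>m\<^sub>|\<^sub>n \<mu>(n/m) e(m)\<close>, split by the sign of \<open>\<mu>\<close> as in \<open>dynatomic\<close>.\<close>

definition moebius_sum :: "nat \<Rightarrow> (nat \<Rightarrow> int) \<Rightarrow> int" where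
  "moebius_sum n e = (\<Sum>m\<in>moebius_pos_divisors n. e m) - (\<Sum>m\<in>moebius_neg_divisors n. e m)"

lemma moebius_sum_eq_0:
  assumes "\<And>m. m dvd n \<Longrightarrow> e m = 0"
  shows "moebius_sum n e = 0"
  using assms by (simp add: moebius_sum_def moebius_pos_divisors_def moebius_neg_divisors_def)

lemma moebius_sum_eq_top:
  assumes n: "n \<ge> 1" and "\<And>m. m dvd n \<Longrightarrow> m < n \<Longrightarrow> e m = 0"
  shows "moebius_sum n e = e n"
proof -
  have "(\<Sum>m\<in>moebius_pos_divisors n. e m) = e n + (\<Sum>m\<in>moebius_pos_divisors n - {n}. e m)"
    using n finite_moebius_divisors(1)[OF n]
    by (simp add: sum.remove moebius_pos_divisors_def moebius_def)
  also have "(\<Sum>m\<in>moebius_pos_divisors n - {n}. e m) = 0"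
  proof (intro sum.neutral ballI)
    fix m assume "m \<in> moebius_pos_divisors n - {n}"
    moreover from this have "m \<le> n" using n by (simp add: moebius_pos_divisors_def dvd_imp_le)
    ultimately show "e m = 0" using assms(2) by (simp add: moebius_pos_divisors_def)
  qed
  moreover have "m < n" if "m \<in> moebius_neg_divisors n" for m
  proof -
    have "m \<noteq> n" using that n by (auto simp: moebius_neg_divisors_def moebius_def)
    moreover have "m \<le> n" using that n by (simp add: moebius_neg_divisors_def dvd_imp_le)
    ultimately show ?thesis by simp
  qed
  hence "(\<Sum>m\<in>moebius_neg_divisors n. e m) = 0"
    using assms(2) by (intro sum.neutral) (auto simp: moebius_neg_divisors_def)
  ultimately show ?thesis by (simp add: moebius_sum_def)
qed

text \<open>A proper divisor of \<open>N\<close> is at most \<open>N / 2\<close>, so the proper divisors contribute less than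
  \<open>2\<^sup>N\<close> to a sum of powers of two.\<close>

lemma moebius_sum_pow2_pos:
  assumes N: "N \<ge> 1"
  shows "moebius_sum N (\<lambda>m. 2 ^ m) > 0"
proof -
  define h where "h = N div 2"
  have "moebius_neg_divisors N \<subseteq> {1..h}"
  proof
    fix m assume "m \<in> moebius_neg_divisors N"
    hence m: "m dvd N" "m \<noteq> N" "m \<ge> 1"
      using N dvd_ge_1 by (auto simp: moebius_neg_divisors_def moebius_def)
    then obtain q where q: "N = m * q" by (elim dvdE)
    hence "q \<ge> 2" using m N by (cases q) (auto simp: Suc_le_eq)
    hence "m * 2 \<le> N" using q by (metis mult_le_mono2)
    thus "m \<in> {1..h}" using m by (simp add: h_def)
  qed
  hence "(\<Sum>m\<in>moebius_neg_divisors N. (2::int) ^ m) \<le> (\<Sum>m\<in>{1..h}. 2 ^ m)"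
    by (intro sum_mono2) auto
  also have "\<dots> = 2 ^ (h + 1) - 2" by (induction h) (simp_all add: sum.cl_ivl_Suc)
  also have "\<dots> < 2 ^ (h + 1)" by simp
  also have "(2::int) ^ (h + 1) \<le> 2 ^ N" using N by (intro power_increasing) (auto simp: h_def)
  also have "(2::int) ^ N \<le> (\<Sum>m\<in>moebius_pos_divisors N. 2 ^ m)"
    using finite_moebius_divisors(1)[OF N] N
    by (intro member_le_sum) (auto simp: moebius_pos_divisors_def moebius_def)
  finally show ?thesis by (simp add: moebius_sum_def)
qed

lemma moebius_sum_neg:
  assumes N: "N \<ge> 1" and w: "w < 0" and e: "\<And>m. m dvd N \<Longrightarrow> 2 * e m = 2 ^ m * w"
  shows "moebius_sum N e < 0"
proof -
  have "2 * moebius_sum N e = moebius_sum N (\<lambda>m. 2 * e m)"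
    by (simp add: moebius_sum_def sum_distrib_left algebra_simps)
  also have "\<dots> = moebius_sum N (\<lambda>m. 2 ^ m) * w"
    using e by (simp add: moebius_sum_def moebius_pos_divisors_def moebius_neg_divisors_def
        sum_distrib_right left_diff_distrib)
  also have "\<dots> < 0" using moebius_sum_pow2_pos[OF N] w by (simp add: mult_pos_neg)
  finally show ?thesis by simp
qed

text \<open>Once an iterate has a pole of order exceeding half that of \<open>t\<close>, squaring dominates and
  the order of the pole doubles at each step.\<close>

lemma place_val_fiter_pole:
  fixes z :: "'a::field poly fract"
  assumes "poly (fiter m) z \<noteq> 0" "place_val P (poly (fiter m) z) < 0"
    "2 * place_val P (poly (fiter m) z) < place_val P (tvar :: 'a poly fract)"
  shows "poly (fiter (m + j)) z \<noteq> 0 \<and>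
         place_val P (poly (fiter (m + j)) z) = 2 ^ j * place_val P (poly (fiter m) z)"
proof (induction j)
  case (Suc j)
  define v where "v = place_val P (poly (fiter m) z)"
  define w where "w = poly (fiter (m + j)) z"
  have w: "w \<noteq> 0" "place_val P (w\<^sup>2) = 2 ^ Suc j * v"
    using Suc place_val_power[of w P 2] by (simp_all add: w_def v_def)
  have "(2::int) ^ Suc j * v \<le> 2 * v"
    using assms(2) by (simp add: v_def mult_right_mono_neg)
  hence "place_val P (w\<^sup>2) < place_val P tvar" using w assms(3) by (simp add: v_def)
  thus ?case using place_val_add_eq_left[of "w\<^sup>2" tvar P] w tvar_nonzero by (simp add: w_def v_def)
qed (use assms in simp)

lemma place_val_periodic_poly_pole:
  fixes \<alpha> :: "'a::field poly fract"
  assumes "\<alpha> \<noteq> 0" "place_val P \<alpha> < 0" "2 * place_val P \<alpha> < place_val P (tvar :: 'a poly fract)"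
    and "m \<ge> 1"
  shows "poly (periodic_poly m) (- \<alpha>) \<noteq> 0 \<and> place_val P (poly (periodic_poly m) (- \<alpha>)) = 2 ^ m * place_val P \<alpha>"
proof -
  have it: "poly (fiter m) (- \<alpha>) \<noteq> 0 \<and> place_val P (poly (fiter m) (- \<alpha>)) = 2 ^ m * place_val P \<alpha>"
    using place_val_fiter_pole[of 0 "- \<alpha>" P m] assms by (simp add: place_val_uminus)
  have "(2::int) \<le> 2 ^ m" using assms(4) by (metis power_one_right power_increasing one_le_numeral)
  hence "(2::int) ^ m * place_val P \<alpha> \<le> 2 * place_val P \<alpha>"
    using assms(2) by (simp add: mult_right_mono_neg)
  hence "place_val P (poly (fiter m) (- \<alpha>)) < place_val P \<alpha>"
    using it assms(2) by linarith
  moreover have "poly (periodic_poly m) (- \<alpha>) = poly (fiter m) (- \<alpha>) + \<alpha>" by (simp add: poly_periodic_poly)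
  ultimately show ?thesis using place_val_add_eq_left[of _ \<alpha> P] it assms(1) by simp
qed

lemma place_val_Inf_periodic_poly:
  fixes \<alpha> :: "'a::field poly fract"
  assumes "\<alpha> = 0 \<or> place_val Inf \<alpha> \<ge> 0" and "m \<ge> 1"
  shows "poly (periodic_poly m) (- \<alpha>) \<noteq> 0 \<and> 2 * place_val Inf (poly (periodic_poly m) (- \<alpha>)) = - (2 ^ m)"
proof -
  have f1: "poly (fiter 1) (- \<alpha>) \<noteq> 0 \<and> place_val Inf (poly (fiter 1) (- \<alpha>)) = -1"
  proof (cases "\<alpha> = 0")
    case False
    hence "place_val Inf (tvar :: 'a poly fract) < place_val Inf (\<alpha>\<^sup>2)"
      using assms(1) place_val_power[of \<alpha> Inf 2] place_val_Inf_tvar[where 'a='a] by simp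
    thus ?thesis using place_val_add_eq_left[OF tvar_nonzero, of "\<alpha>\<^sup>2" Inf] False place_val_Inf_tvar
      by (simp add: add.commute)
  qed (simp add: tvar_nonzero place_val_Inf_tvar)
  obtain k where k: "m = Suc k" using assms(2) by (cases m) auto
  have "poly (fiter (1 + k)) (- \<alpha>) \<noteq> 0 \<and>
      place_val Inf (poly (fiter (1 + k)) (- \<alpha>)) = 2 ^ k * place_val Inf (poly (fiter 1) (- \<alpha>))"
    by (rule place_val_fiter_pole) (use f1 place_val_Inf_tvar[where 'a='a] in simp_all)
  hence it: "poly (fiter m) (- \<alpha>) \<noteq> 0 \<and> 2 * place_val Inf (poly (fiter m) (- \<alpha>)) = - (2 ^ m)"
    using f1 by (simp add: k)
  have "poly (periodic_poly m) (- \<alpha>) = poly (fiter m) (- \<alpha>) + \<alpha>" by (simp add: poly_periodic_poly)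
  moreover have "\<alpha> \<noteq> 0 \<Longrightarrow> place_val Inf (poly (fiter m) (- \<alpha>)) < place_val Inf \<alpha>"
    using it assms(1) by (smt (verit) zero_less_power)
  ultimately show ?thesis
    using place_val_add_eq_left[of "poly (fiter m) (- \<alpha>)" \<alpha> Inf] it by (cases "\<alpha> = 0") auto
qed

lemma poly_periodic_poly_neg_nonzero:
  fixes \<alpha> :: "'a::field poly fract"
  assumes "m \<ge> 1"
  shows "poly (periodic_poly m) (- \<alpha>) \<noteq> 0"
proof (cases "\<alpha> = 0 \<or> place_val Inf \<alpha> \<ge> 0")
  case False
  hence "2 * place_val Inf \<alpha> < place_val Inf (tvar :: 'a poly fract)"
    using place_val_Inf_tvar[where 'a='a] by simp
  thus ?thesis using place_val_periodic_poly_pole[of \<alpha> Inf m] False assms by simp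
qed (use place_val_Inf_periodic_poly assms in blast)

lemma place_val_poly_dynatomic:
  fixes \<alpha> :: "'a::{alg_closed_field, field_char_0} poly fract"
  assumes n: "n \<ge> 1"
  shows "poly (dynatomic n) (- \<alpha>) \<noteq> 0 \<and>
    place_val P (poly (dynatomic n) (- \<alpha>)) = moebius_sum n (\<lambda>m. place_val P (poly (periodic_poly m) (- \<alpha>)))"
proof -
  let ?g = "\<lambda>m. poly (periodic_poly m) (- \<alpha>)"
  have nz: "?g m \<noteq> 0" if "m dvd n" for m
    using poly_periodic_poly_neg_nonzero dvd_ge_1[OF that n] by blast
  have num: "poly (dynatomic_num n) (- \<alpha>) \<noteq> 0 \<and>
      place_val P (poly (dynatomic_num n) (- \<alpha>)) = (\<Sum>m\<in>moebius_pos_divisors n. place_val P (?g m))"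
    using place_val_prod[OF finite_moebius_divisors(1)[OF n], of ?g P] nz
    by (auto simp: dynatomic_num_def poly_prod moebius_pos_divisors_def)
  have den: "poly (dynatomic_den n) (- \<alpha>) \<noteq> 0 \<and>
      place_val P (poly (dynatomic_den n) (- \<alpha>)) = (\<Sum>m\<in>moebius_neg_divisors n. place_val P (?g m))"
    using place_val_prod[OF finite_moebius_divisors(2)[OF n], of ?g P] nz
    by (auto simp: dynatomic_den_def poly_prod moebius_neg_divisors_def)
  have eq: "poly (dynatomic_num n) (- \<alpha>) = poly (dynatomic n) (- \<alpha>) * poly (dynatomic_den n) (- \<alpha>)"
    using dynatomic_num_eq[OF n, where 'a='a] by simp
  hence "poly (dynatomic n) (- \<alpha>) \<noteq> 0" using num by auto
  thus ?thesis using eq num den place_val_mult[of _ _ P] by (simp add: moebius_sum_def)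
qed

lemma place_val_Inf_dynatomic_neg:
  fixes \<alpha> :: "'a::{alg_closed_field, field_char_0} poly fract"
  assumes N: "N \<ge> 1"
  shows "place_val Inf (poly (dynatomic N) (- \<alpha>)) < 0"
proof (cases "\<alpha> = 0 \<or> place_val Inf \<alpha> \<ge> 0")
  case True
  have e: "2 * place_val Inf (poly (periodic_poly m) (- \<alpha>)) = 2 ^ m * (-1)" if "m dvd N" for m
    using place_val_Inf_periodic_poly[OF True dvd_ge_1[OF that N]] by simp
  show ?thesis using moebius_sum_neg[OF N _ e] place_val_poly_dynatomic[OF N, of \<alpha> Inf] by simp
next
  case False
  hence "2 * place_val Inf \<alpha> < place_val Inf (tvar :: 'a poly fract)"
    using place_val_Inf_tvar[where 'a='a] by simp
  hence e: "2 * place_val Inf (poly (periodic_poly m) (- \<alpha>)) = 2 ^ m * (2 * place_val Inf \<alpha>)"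
    if "m dvd N" for m
    using place_val_periodic_poly_pole[of \<alpha> Inf m] False dvd_ge_1[OF that N] by simp
  show ?thesis using moebius_sum_neg[OF N _ e] place_val_poly_dynatomic[OF N, of \<alpha> Inf] False by simp
qed

lemma place_val_Fin_dynatomic_neg:
  fixes \<alpha> :: "'a::{alg_closed_field, field_char_0} poly fract"
  assumes N: "N \<ge> 1" and "\<alpha> \<noteq> 0" "place_val (Fin c) \<alpha> < 0"
  shows "place_val (Fin c) (poly (dynatomic N) (- \<alpha>)) < 0"
proof -
  have "2 * place_val (Fin c) \<alpha> < place_val (Fin c) (tvar :: 'a poly fract)"
    using assms place_val_Fin_tvar_nonneg[of c] by simp
  hence e: "2 * place_val (Fin c) (poly (periodic_poly m) (- \<alpha>)) = 2 ^ m * (2 * place_val (Fin c) \<alpha>)"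
    if "m dvd N" for m
    using place_val_periodic_poly_pole[of \<alpha> "Fin c" m] assms dvd_ge_1[OF that N] by simp
  show ?thesis using moebius_sum_neg[OF N _ e] place_val_poly_dynatomic[OF N, of \<alpha> "Fin c"] assms by simp
qed

lemma place_val_periodic_poly_regular:
  fixes \<alpha> :: "'a::field poly fract"
  assumes "regular_at c \<alpha>" "m \<ge> 1"
  shows "place_val (Fin c) (poly (periodic_poly m) (- \<alpha>)) \<ge> 0 \<and>
    (place_val (Fin c) (poly (periodic_poly m) (- \<alpha>)) > 0 \<longleftrightarrow>
      ((\<lambda>z. z\<^sup>2 + c) ^^ m) (- eval_at c \<alpha>) = - eval_at c \<alpha>)"
proof -
  have "regular_at c (- \<alpha>) \<and> eval_at c (- \<alpha>) = - eval_at c \<alpha>"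
    using regular_at_uminus[OF assms(1)] .
  hence "regular_at c (poly (periodic_poly m) (- \<alpha>)) \<and>
      eval_at c (poly (periodic_poly m) (- \<alpha>)) = ((\<lambda>z. z\<^sup>2 + c) ^^ m) (- eval_at c \<alpha>) - (- eval_at c \<alpha>)"
    using regular_at_poly_fiter[of c "- \<alpha>" m] regular_at_diff[of c "poly (fiter m) (- \<alpha>)" "- \<alpha>"]
    by (simp add: poly_periodic_poly)
  moreover have nz: "poly (periodic_poly m) (- \<alpha>) \<noteq> 0"
    using poly_periodic_poly_neg_nonzero[OF assms(2)] .
  ultimately show ?thesis
    using regular_at_iff_place_val_nonneg[OF nz, of c] eval_at_eq_0_iff_place_val_pos[OF _ nz, of c]
    by (simp add: eq_neg_iff_add_eq_0)
qed

lemma vanishes_dynatomic_of_exact_period: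
  fixes \<alpha> :: "'a::{alg_closed_field, field_char_0} poly fract"
  assumes "regular_at c \<alpha>" "exact_period (\<lambda>z. z\<^sup>2 + c) (- eval_at c \<alpha>) n"
  shows "vanishes_at (Fin c) (poly (dynatomic n) (- \<alpha>))"
proof -
  let ?e = "\<lambda>m. place_val (Fin c) (poly (periodic_poly m) (- \<alpha>))"
  have n: "n \<ge> 1" using assms(2) by (simp add: exact_period_def)
  have e: "?e m \<ge> 0 \<and> (?e m > 0 \<longleftrightarrow> n dvd m)" if "m \<ge> 1" for m
    using place_val_periodic_poly_regular[OF assms(1) that] exact_period_funpow_eq_iff[OF assms(2)] by simp
  have "moebius_sum n ?e = ?e n"
  proof (rule moebius_sum_eq_top[OF n])
    fix m assume "m dvd n" "m < n"
    moreover from this have "m \<ge> 1" using dvd_ge_1 n by blast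
    ultimately show "?e m = 0" using e[of m] nat_dvd_not_less[of m n] by simp
  qed
  thus ?thesis using e[OF n] place_val_poly_dynatomic[OF n, of \<alpha> "Fin c"] by (simp add: vanishes_at_def)
qed

lemma periodic_of_vanishes_dynatomic:
  fixes \<alpha> :: "'a::{alg_closed_field, field_char_0} poly fract"
  assumes "n \<ge> 1" "regular_at c \<alpha>" "vanishes_at (Fin c) (poly (dynatomic n) (- \<alpha>))"
  obtains m where "m dvd n" "m \<ge> 1" "((\<lambda>z. z\<^sup>2 + c) ^^ m) (- eval_at c \<alpha>) = - eval_at c \<alpha>"
proof -
  let ?e = "\<lambda>m. place_val (Fin c) (poly (periodic_poly m) (- \<alpha>))"
  have "moebius_sum n ?e \<noteq> 0"
    using assms place_val_poly_dynatomic[OF assms(1), of \<alpha> "Fin c"] by (simp add: vanishes_at_def)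
  then obtain m where m: "m dvd n" "?e m \<noteq> 0" using moebius_sum_eq_0[of n ?e] by blast
  moreover have "m \<ge> 1" using dvd_ge_1[OF m(1) assms(1)] .
  ultimately show thesis
    using that place_val_periodic_poly_regular[OF assms(2)] by fastforce
qed

lemma dynatomic_not_vanishes_at_pole:
  fixes \<alpha> :: "'a::{alg_closed_field, field_char_0} poly fract"
  assumes "N \<ge> 1" "P = Inf \<or> (\<exists>c. P = Fin c \<and> \<not> regular_at c \<alpha>)"
  shows "\<not> vanishes_at P (poly (dynatomic N) (- \<alpha>))"
proof -
  have "place_val P (poly (dynatomic N) (- \<alpha>)) < 0"
    using assms(2)
  proof
    assume "\<exists>c. P = Fin c \<and> \<not> regular_at c \<alpha>"
    then obtain c where c: "P = Fin c" "\<not> regular_at c \<alpha>" by blast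
    hence "\<alpha> \<noteq> 0" using regular_at_0 by auto
    thus ?thesis
      using c regular_at_iff_place_val_nonneg place_val_Fin_dynatomic_neg[OF assms(1)] by fastforce
  qed (simp add: place_val_Inf_dynatomic_neg[OF assms(1)])
  thus ?thesis using place_val_poly_dynatomic[OF assms(1), of \<alpha> P] by (simp add: vanishes_at_def)
qed

lemma realizes_portrait_1_iff:
  fixes \<alpha> :: "'a::field_char_0 poly fract"
  shows "realizes_portrait \<alpha> 1 N \<longleftrightarrow>
    (\<exists>c. regular_at c \<alpha> \<and> eval_at c \<alpha> \<noteq> 0 \<and> exact_period (\<lambda>z. z\<^sup>2 + c) (- eval_at c \<alpha>) N)"
proof
  assume "realizes_portrait \<alpha> 1 N"
  then obtain c p q where "poly q c \<noteq> 0" "\<alpha> = Fract p q"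
      "has_portrait (\<lambda>z. z\<^sup>2 + c) (poly p c / poly q c) 1 N"
    by (auto simp: realizes_portrait_def)
  thus "\<exists>c. regular_at c \<alpha> \<and> eval_at c \<alpha> \<noteq> 0 \<and> exact_period (\<lambda>z. z\<^sup>2 + c) (- eval_at c \<alpha>) N"
    using eval_at_Fract has_portrait_1_iff by metis
next
  assume "\<exists>c. regular_at c \<alpha> \<and> eval_at c \<alpha> \<noteq> 0 \<and> exact_period (\<lambda>z. z\<^sup>2 + c) (- eval_at c \<alpha>) N"
  then obtain c where c: "regular_at c \<alpha>" "eval_at c \<alpha> \<noteq> 0" "exact_period (\<lambda>z. z\<^sup>2 + c) (- eval_at c \<alpha>) N"
    by blast
  then obtain p q where "poly q c \<noteq> 0" "\<alpha> = Fract p q" "eval_at c \<alpha> = poly p c / poly q c"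
    by (metis regular_atE)
  moreover from this have "q \<noteq> 0" by auto
  ultimately show "realizes_portrait \<alpha> 1 N"
    using c has_portrait_1_iff unfolding realizes_portrait_def by metis
qed

lemma vanishes_dynatomic_cases:
  fixes \<alpha> :: "'a::{alg_closed_field, field_char_0} poly fract"
  assumes "N \<ge> 1" and vanishes: "vanishes_at P (poly (dynatomic N) (- \<alpha>))"
  shows "realizes_portrait \<alpha> 1 N \<or> (\<exists>n. n dvd N \<and> n < N \<and> vanishes_at P (poly (dynatomic n) (- \<alpha>)))
    \<or> vanishes_at P \<alpha>"
proof -
  obtain c where P: "P = Fin c" and reg: "regular_at c \<alpha>"
    using vanishes dynatomic_not_vanishes_at_pole[OF assms(1), of P \<alpha>] by (cases P) auto
  let ?y = "- eval_at c \<alpha>"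
  show ?thesis
  proof (cases "eval_at c \<alpha> = 0")
    case False
    obtain m where m: "m dvd N" "m \<ge> 1" "((\<lambda>z. z\<^sup>2 + c) ^^ m) ?y = ?y"
      using periodic_of_vanishes_dynatomic[OF assms(1) reg] vanishes P by blast
    obtain n where n: "exact_period (\<lambda>z. z\<^sup>2 + c) ?y n"
      using exact_period_exists[OF m(3)] m(2) by auto
    have "n dvd m" using exact_period_funpow_eq_iff[OF n] m(3) by simp
    hence "n dvd N" using m(1) by (rule dvd_trans)
    show ?thesis
    proof (cases "n = N")
      case True
      thus ?thesis using n False reg realizes_portrait_1_iff by blast
    next
      case False
      hence "n < N" using dvd_imp_le[OF \<open>n dvd N\<close>] assms(1) by simp
      thus ?thesis using vanishes_dynatomic_of_exact_period[OF reg n] \<open>n dvd N\<close> P by blast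
    qed
  qed (simp add: P vanishes_at_iff_eval_at_eq_0[OF reg])
qed

lemma realizes_portrait_place:
  fixes \<alpha> :: "'a::{alg_closed_field, field_char_0} poly fract"
  assumes "realizes_portrait \<alpha> 1 N"
  obtains c where "vanishes_at (Fin c) (poly (dynatomic N) (- \<alpha>))" "\<not> vanishes_at (Fin c) \<alpha>"
    "\<And>n. n dvd N \<Longrightarrow> n < N \<Longrightarrow> \<not> vanishes_at (Fin c) (poly (dynatomic n) (- \<alpha>))"
proof -
  obtain c where reg: "regular_at c \<alpha>" and "eval_at c \<alpha> \<noteq> 0"
    and period: "exact_period (\<lambda>z. z\<^sup>2 + c) (- eval_at c \<alpha>) N"
    using assms realizes_portrait_1_iff by blast
  hence "\<not> vanishes_at (Fin c) \<alpha>" by (simp add: vanishes_at_iff_eval_at_eq_0)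
  moreover have "\<not> vanishes_at (Fin c) (poly (dynatomic n) (- \<alpha>))" if n: "n dvd N" "n < N" for n
  proof
    have N: "N \<ge> 1" using period by (simp add: exact_period_def)
    assume "vanishes_at (Fin c) (poly (dynatomic n) (- \<alpha>))"
    then obtain m where m: "m dvd n" "m \<ge> 1" "((\<lambda>z. z\<^sup>2 + c) ^^ m) (- eval_at c \<alpha>) = - eval_at c \<alpha>"
      by (rule periodic_of_vanishes_dynatomic[OF dvd_ge_1[OF n(1) N] reg])
    have "N dvd m" using exact_period_funpow_eq_iff[OF period] m(3) by simp
    moreover have "m < N" using dvd_imp_le[OF m(1)] m(2) n(2) dvd_ge_1[OF n(1) N] by simp
    ultimately show False using m(2) nat_dvd_not_less[of m N] by simp
  qed
  ultimately show thesis using that[OF vanishes_dynatomic_of_exact_period[OF reg period]] by blast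
qed

theorem corollary5p8:
  fixes \<alpha> :: "'a::{alg_closed_field, field_char_0} poly fract"
    and N :: nat
  assumes "N \<ge> 1"
  shows "\<not> realizes_portrait \<alpha> 1 N \<longleftrightarrow>
    (\<forall>P. vanishes_at P (poly (dynatomic N) (- \<alpha>)) \<longrightarrow>
       ((\<exists>n. n dvd N \<and> n < N \<and> vanishes_at P (poly (dynatomic n) (- \<alpha>)))
        \<or> vanishes_at P \<alpha>))"
proof
  assume "\<not> realizes_portrait \<alpha> 1 N"
  thus "\<forall>P. vanishes_at P (poly (dynatomic N) (- \<alpha>)) \<longrightarrow>
      ((\<exists>n. n dvd N \<and> n < N \<and> vanishes_at P (poly (dynatomic n) (- \<alpha>))) \<or> vanishes_at P \<alpha>)"
    using vanishes_dynatomic_cases[OF assms] by blast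
next
  assume proper: "\<forall>P. vanishes_at P (poly (dynatomic N) (- \<alpha>)) \<longrightarrow>
      ((\<exists>n. n dvd N \<and> n < N \<and> vanishes_at P (poly (dynatomic n) (- \<alpha>))) \<or> vanishes_at P \<alpha>)"
  show "\<not> realizes_portrait \<alpha> 1 N"
  proof
    assume "realizes_portrait \<alpha> 1 N"
    then obtain c where "vanishes_at (Fin c) (poly (dynatomic N) (- \<alpha>))" "\<not> vanishes_at (Fin c) \<alpha>"
      "\<And>n. n dvd N \<Longrightarrow> n < N \<Longrightarrow> \<not> vanishes_at (Fin c) (poly (dynatomic n) (- \<alpha>))"
      by (rule realizes_portrait_place) blast
    thus False using proper by blast
  qed
qed

end
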